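(* Let $a<b$ be real numbers, let $M\colon[a,b]\to\mathbb{R}$ be non-decreasing, and let $N\colon[M(a),M(b)]\to\mathbb{R}$ be non-decreasing. Let $\Lambda=N\circ M\colon[a,b]\to\mathbb{R}$, let $\lambda$ be the measure on $[a,b]$ corresponding to $\Lambda$, and let $\nu$ be the measure on $[M(a),M(b)]$ corresponding to $N$. Let \[H=\{y\in[M(a),M(b)] : M^{-1}[\{y\}]\text{ contains more than one point}\},\] and let $X\colon[M(a),M(b)]\to[a,b]$ be defined by $X(y)=\inf\{x\in[a,b]: y\le M(x)\}$. Suppose that $N$ is right-continuous at $y$ for each $y\in H$ (where, by convention, $N$ is considered right-continuous at $M(b)$, with $N(M(b)+)=N(M(b))$). Then $\lambda$ is the image measure of $\nu$ under $X$, i.e. $\lambda(E)=\nu(X^{-1}[E])$ for every Borel set $E\subseteq[a,b]$, and for each bounded Borel function $f\colon[a,b]\to\mathbb{R}$, \[\int_a^b f(x)\,dN(M(x))=\int_{M(a)}^{M(b)} f(X(y))\,dN(y).\]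
   Context: "Non-decreasing" is what the paper calls increasing. For a non-decreasing function $F\colon[c,d]\to\mathbb{R}$, the measure corresponding to $F$ is the unique Borel measure $\mu$ on $[c,d]$ such that for every continuous $f\colon[c,d]\to\mathbb{R}$, $\int_{[c,d]} f\,d\mu$ equals the Riemann–Stieltjes integral $\int_c^d f(x)\,dF(x)$. For a bounded Borel function $f$, the Lebesgue–Stieltjes integral $\int_c^d f(x)\,dF(x)$ is defined as $\int_{[c,d]} f\,d\mu$. The notation $\int_a^b f(x)\,dN(M(x))$ means $\int_a^b f(x)\,d\Lambda(x)$ with $\Lambda=N\circ M$. *)

theory Defs
  imports "HOL-Analysis.Analysis"
begin

definition RS_tagged_partition :: "real \<Rightarrow> real \<Rightarrow> nat \<Rightarrow> (nat \<Rightarrow> real) \<Rightarrow> (nat \<Rightarrow> real) \<Rightarrow> bool" where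
  "RS_tagged_partition c d n x t \<longleftrightarrow>
     x 0 = c \<and> x n = d \<and> (\<forall>i<n. x i < x (Suc i) \<and> x i \<le> t i \<and> t i \<le> x (Suc i))"

definition RS_sum :: "(real \<Rightarrow> real) \<Rightarrow> (real \<Rightarrow> real) \<Rightarrow> nat \<Rightarrow> (nat \<Rightarrow> real) \<Rightarrow> (nat \<Rightarrow> real) \<Rightarrow> real" where
  "RS_sum f F n x t = (\<Sum>i<n. f (t i) * (F (x (Suc i)) - F (x i)))"

definition has_RS_integral :: "(real \<Rightarrow> real) \<Rightarrow> (real \<Rightarrow> real) \<Rightarrow> real \<Rightarrow> real \<Rightarrow> real \<Rightarrow> bool" where
  "has_RS_integral f F c d I \<longleftrightarrow>
     (\<forall>\<epsilon>>0. \<exists>\<delta>>0. \<forall>n x t. RS_tagged_partition c d n x t \<and> (\<forall>i<n. x (Suc i) - x i < \<delta>)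
        \<longrightarrow> \<bar>RS_sum f F n x t - I\<bar> < \<epsilon>)"

definition corresponding_measure :: "(real \<Rightarrow> real) \<Rightarrow> real \<Rightarrow> real \<Rightarrow> real measure \<Rightarrow> bool" where
  "corresponding_measure F c d \<mu> \<longleftrightarrow>
     space \<mu> = {c..d} \<and> sets \<mu> = sets (restrict_space borel {c..d}) \<and> finite_measure \<mu> \<and>
     (\<forall>f. continuous_on {c..d} f \<longrightarrow> has_RS_integral f F c d (integral\<^sup>L \<mu> f))"

definition gen_inverse :: "(real \<Rightarrow> real) \<Rightarrow> real \<Rightarrow> real \<Rightarrow> real \<Rightarrow> real" where
  "gen_inverse M a b y = Inf {x \<in> {a..b}. y \<le> M x}"

end

theory Submission
  imports Defs
begin

text \<open>Both \<open>\<lambda>\<close> and the image of \<open>\<nu>\<close> under \<open>X\<close> are finite Borel measures on \<open>[a,b]\<close>, so it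
  suffices to compare them on the intervals \<open>[a,x]\<close>. Testing the defining property of a
  corresponding measure against continuous ramps shows that the measure of a non-decreasing \<open>F\<close>
  gives \<open>[c,y]\<close> the mass \<open>F(y+) - F(c)\<close>, where \<open>F(y+) = Inf (F ` {y<..d})\<close>; hence
  \<open>\<lambda>[a,x] = \<Lambda>(x+) - \<Lambda>(a)\<close>. On the other hand \<open>X y \<le> x\<close> exactly when \<open>y \<le> m = M(x+)\<close>, so the
  image measure gives \<open>[a,x]\<close> the mass \<open>\<nu>[M(a),m] = N(m+) - N(M(a))\<close>. Finally \<open>\<Lambda>(x+) = N(m+)\<close>:
  this is clear unless \<open>M\<close> attains \<open>m\<close> on \<open>(x,b]\<close>, and then \<open>M\<close> is constant on a nondegenerate
  interval, so \<open>m \<in> H\<close> and right-continuity of \<open>N\<close> at \<open>m\<close> gives \<open>\<Lambda>(x+) = N(m) = N(m+)\<close>. The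
  integral formula is then the change of variables for image measures.\<close>

section \<open>Riemann--Stieltjes sums\<close>

lemma RS_tagged_partition_mono:
  assumes "RS_tagged_partition c d n x t" "i \<le> j" "j \<le> n"
  shows "x i \<le> x j"
  using assms(2,3)
proof (induction j)
  case (Suc j)
  show ?case
  proof (cases "i = Suc j")
    case False
    then have "x i \<le> x j" using Suc by simp
    also have "x j < x (Suc j)" using assms(1) Suc.prems by (simp add: RS_tagged_partition_def)
    finally show ?thesis by simp
  qed simp
qed simp

lemma RS_tagged_partition_in_interval:
  assumes "RS_tagged_partition c d n x t" "i \<le> n"
  shows "x i \<in> {c..d}"
  using RS_tagged_partition_mono[OF assms(1), of 0 i] RS_tagged_partition_mono[OF assms(1), of i n]
    assms by (auto simp: RS_tagged_partition_def)

lemma RS_tagged_partition_fine_exists: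
  assumes "c \<le> d" "\<delta> > 0"
  shows "\<exists>n x t. RS_tagged_partition c d n x t \<and> (\<forall>i<n. x (Suc i) - x i < \<delta>)"
proof (cases "c = d")
  case True
  then show ?thesis
    by (intro exI[of _ 0] exI[of _ "\<lambda>_. c"]) (auto simp: RS_tagged_partition_def)
next
  case False
  then have "c < d" using assms by simp
  obtain n :: nat where n: "(d - c) / \<delta> < n" using reals_Archimedean2 by blast
  with \<open>c < d\<close> assms(2) have "n > 0"
    by (metis divide_pos_pos diff_gt_0_iff_gt gr_zeroI less_asym of_nat_0)
  with n assms(2) have "(d - c) / n < \<delta>"
    by (simp add: field_simps)
  define x where "x i = c + i * ((d - c) / n)" for i :: nat
  have "RS_tagged_partition c d n x x"
    unfolding RS_tagged_partition_def x_def using \<open>n > 0\<close> \<open>c < d\<close> by (auto simp: field_simps)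
  moreover have "x (Suc i) - x i = (d - c) / n" for i
    using \<open>n > 0\<close> by (simp add: x_def field_simps)
  ultimately show ?thesis using \<open>(d - c) / n < \<delta>\<close> by metis
qed

lemma has_RS_integral_approx:
  assumes "has_RS_integral f F c d I" "c \<le> d" "e > 0" "\<eta> > 0"
  obtains n x t where "RS_tagged_partition c d n x t" "\<forall>i<n. x (Suc i) - x i < \<eta>"
    "\<bar>RS_sum f F n x t - I\<bar> < e"
proof -
  obtain \<delta> where "\<delta> > 0" and \<delta>: "\<And>n x t. RS_tagged_partition c d n x t \<Longrightarrow>
      \<forall>i<n. x (Suc i) - x i < \<delta> \<Longrightarrow> \<bar>RS_sum f F n x t - I\<bar> < e"
    using assms(1,3) unfolding has_RS_integral_def by metis
  obtain n x t where "RS_tagged_partition c d n x t" "\<forall>i<n. x (Suc i) - x i < min \<delta> \<eta>"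
    using RS_tagged_partition_fine_exists[of c d "min \<delta> \<eta>"] assms(2,4) \<open>\<delta> > 0\<close> by auto
  with \<delta> that show ?thesis by auto
qed

lemma has_RS_integral_unique:
  assumes "has_RS_integral f F c d I" "has_RS_integral f F c d J" "c \<le> d"
  shows "I = J"
proof -
  have "\<bar>I - J\<bar> \<le> 0 + e" if "e > 0" for e
  proof -
    obtain \<delta> where "\<delta> > 0" and \<delta>: "\<And>n x t. RS_tagged_partition c d n x t \<Longrightarrow>
        \<forall>i<n. x (Suc i) - x i < \<delta> \<Longrightarrow> \<bar>RS_sum f F n x t - J\<bar> < e / 2"
      using assms(2) half_gt_zero[OF \<open>e > 0\<close>] unfolding has_RS_integral_def by metis
    obtain n x t where "RS_tagged_partition c d n x t" "\<forall>i<n. x (Suc i) - x i < \<delta>"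
      "\<bar>RS_sum f F n x t - I\<bar> < e / 2"
      using has_RS_integral_approx[OF assms(1,3), of "e / 2" \<delta>] \<open>e > 0\<close> \<open>\<delta> > 0\<close> by auto
    moreover from \<delta> this(1,2) have "\<bar>RS_sum f F n x t - J\<bar> < e / 2" .
    ultimately show ?thesis by linarith
  qed
  then show ?thesis using field_le_epsilon[of "\<bar>I - J\<bar>" 0] by simp
qed

lemma has_RS_integral_one: "has_RS_integral (\<lambda>_. 1) F c d (F d - F c)"
proof -
  have "RS_sum (\<lambda>_. 1) F n x t = F d - F c" if "RS_tagged_partition c d n x t" for n x t
    using that sum_lessThan_telescope[where f = "\<lambda>i. F (x i)"]
    by (simp add: RS_sum_def RS_tagged_partition_def)
  then show ?thesis by (auto simp: has_RS_integral_def)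
qed

lemma RS_tagged_partition_telescope_min:
  fixes F :: "real \<Rightarrow> real"
  assumes "RS_tagged_partition c d n x t" "c \<le> u" "u \<le> d"
  shows "(\<Sum>i<n. F (min (x (Suc i)) u) - F (min (x i) u)) = F u - F c"
  using assms sum_lessThan_telescope[where f = "\<lambda>i. F (min (x i) u)"]
  by (auto simp: RS_tagged_partition_def)

lemma has_RS_integral_ge_increment:
  assumes F: "mono_on {c..d} F" and I: "has_RS_integral h F c d I"
    and u: "c \<le> u" "u < p" "p \<le> d"
    and h_nonneg: "\<forall>z\<in>{c..d}. 0 \<le> h z" and h_one: "\<forall>z\<in>{c..p}. h z = 1"
  shows "F u - F c \<le> I"
proof (rule field_le_epsilon)
  fix e :: real assume "e > 0"
  obtain n x t where P: "RS_tagged_partition c d n x t" and mesh: "\<forall>i<n. x (Suc i) - x i < p - u"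
    and close: "\<bar>RS_sum h F n x t - I\<bar> < e"
    using has_RS_integral_approx[OF I, of e "p - u"] u \<open>e > 0\<close> by auto
  have "F u - F c = (\<Sum>i<n. F (min (x (Suc i)) u) - F (min (x i) u))"
    using RS_tagged_partition_telescope_min[OF P, of u F] u by simp
  also have "\<dots> \<le> RS_sum h F n x t"
    unfolding RS_sum_def
  proof (rule sum_mono)
    fix i assume "i \<in> {..<n}"
    then have xi: "x i \<in> {c..d}" "x (Suc i) \<in> {c..d}" "x i \<le> t i" "t i \<le> x (Suc i)"
      "x i < x (Suc i)" "x (Suc i) - x i < p - u"
      using RS_tagged_partition_in_interval[OF P] P mesh by (auto simp: RS_tagged_partition_def)
    show "F (min (x (Suc i)) u) - F (min (x i) u) \<le> h (t i) * (F (x (Suc i)) - F (x i))"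
    proof (cases "x i < u")
      case True
      then have "h (t i) = 1" using h_one xi by auto
      moreover have "F (min (x (Suc i)) u) \<le> F (x (Suc i))"
        using xi u by (intro mono_onD[OF F]) auto
      ultimately show ?thesis using True by simp
    next
      case False
      have "0 \<le> h (t i)" using h_nonneg xi by auto
      moreover have "F (x i) \<le> F (x (Suc i))" using xi by (intro mono_onD[OF F]) auto
      ultimately show ?thesis using False xi by simp
    qed
  qed
  finally show "F u - F c \<le> I + e" using close by linarith
qed

lemma has_RS_integral_le_increment:
  assumes F: "mono_on {c..d} F" and I: "has_RS_integral h F c d I"
    and v: "c \<le> q" "q < v" "v \<le> d"
    and h_bounds: "\<forall>z\<in>{c..d}. 0 \<le> h z \<and> h z \<le> 1" and h_zero: "\<forall>z\<in>{q..d}. h z = 0"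
  shows "I \<le> F v - F c"
proof (rule field_le_epsilon)
  fix e :: real assume "e > 0"
  obtain n x t where P: "RS_tagged_partition c d n x t" and mesh: "\<forall>i<n. x (Suc i) - x i < v - q"
    and close: "\<bar>RS_sum h F n x t - I\<bar> < e"
    using has_RS_integral_approx[OF I, of e "v - q"] v \<open>e > 0\<close> by auto
  have "RS_sum h F n x t \<le> (\<Sum>i<n. F (min (x (Suc i)) v) - F (min (x i) v))"
    unfolding RS_sum_def
  proof (rule sum_mono)
    fix i assume "i \<in> {..<n}"
    then have xi: "x i \<in> {c..d}" "x (Suc i) \<in> {c..d}" "x i \<le> t i" "t i \<le> x (Suc i)"
      "x i < x (Suc i)" "x (Suc i) - x i < v - q"
      using RS_tagged_partition_in_interval[OF P] P mesh by (auto simp: RS_tagged_partition_def)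
    show "h (t i) * (F (x (Suc i)) - F (x i)) \<le> F (min (x (Suc i)) v) - F (min (x i) v)"
    proof (cases "x (Suc i) \<le> v")
      case True
      have "0 \<le> F (x (Suc i)) - F (x i)" using xi by (auto intro: mono_onD[OF F])
      moreover have "h (t i) \<le> 1" using h_bounds xi by auto
      ultimately show ?thesis using True xi by (simp add: mult_left_le_one_le h_bounds)
    next
      case False
      then have "h (t i) = 0" using h_zero xi by auto
      moreover have "F (min (x i) v) \<le> F v" using xi v by (intro mono_onD[OF F]) auto
      ultimately show ?thesis using False by simp
    qed
  qed
  also have "\<dots> = F v - F c"
    using RS_tagged_partition_telescope_min[OF P, of v F] v by simp
  finally show "I \<le> F v - F c + e" using close by linarith
qed

section \<open>Right limits of non-decreasing functions\<close>

lemma mono_on_Inf_image_greaterThan: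
  fixes M :: "real \<Rightarrow> real"
  assumes M: "mono_on {a..b} M" and x: "a \<le> x" "x < b"
  shows "bdd_below (M ` {x<..b})" "M x \<le> Inf (M ` {x<..b})"
    "t \<in> {x<..b} \<Longrightarrow> Inf (M ` {x<..b}) \<le> M t"
proof -
  show bdd: "bdd_below (M ` {x<..b})"
    by (rule bdd_belowI[of _ "M x"]) (use x in \<open>auto intro: mono_onD[OF M]\<close>)
  show "M x \<le> Inf (M ` {x<..b})"
    by (rule cInf_greatest) (use x in \<open>auto intro: mono_onD[OF M]\<close>)
  show "t \<in> {x<..b} \<Longrightarrow> Inf (M ` {x<..b}) \<le> M t"
    by (rule cInf_lower[OF _ bdd]) auto
qed

lemma Inf_image_greaterThan_right_continuous:
  fixes N :: "real \<Rightarrow> real"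
  assumes N: "mono_on {c..d} N" and m: "c \<le> m" "m < d" and rc: "continuous (at_right m) N"
  shows "Inf (N ` {m<..d}) = N m"
proof (rule order.antisym)
  note bdd = mono_on_Inf_image_greaterThan(1)[OF N m]
  show "N m \<le> Inf (N ` {m<..d})" using mono_on_Inf_image_greaterThan(2)[OF N m] .
  show "Inf (N ` {m<..d}) \<le> N m"
  proof (rule field_le_epsilon)
    fix e :: real assume "e > 0"
    have "(N \<longlongrightarrow> N m) (at_right m)" using rc by (simp add: continuous_within)
    then have "eventually (\<lambda>z. N z < N m + e) (at_right m)"
      using \<open>e > 0\<close> by (intro order_tendstoD(2)) auto
    then obtain b where "b > m" and b: "\<And>z. m < z \<Longrightarrow> z < b \<Longrightarrow> N z < N m + e"
      unfolding eventually_at_right_field by blast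
    define z where "z = min ((m + b) / 2) d"
    have z: "m < z" "z < b" "z \<le> d" using \<open>b > m\<close> m by (auto simp: z_def min_def)
    have "Inf (N ` {m<..d}) \<le> N z" by (rule cInf_lower[OF _ bdd]) (use z in auto)
    also have "\<dots> < N m + e" using b z by auto
    finally show "Inf (N ` {m<..d}) \<le> N m + e" by simp
  qed
qed

lemma Inf_comp_image_greaterThan_attained:
  fixes M N :: "real \<Rightarrow> real"
  assumes M: "mono_on {a..b} M" and N: "mono_on {M a..M b} N" and x: "a \<le> x" "x < b"
    and t0: "t0 \<in> {x<..b}" "M t0 = Inf (M ` {x<..b})" and m_less: "M t0 < M b"
    and rc: "continuous (at_right (M t0)) N"
  shows "Inf ((N \<circ> M) ` {x<..b}) = Inf (N ` {M t0<..M b})"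
proof -
  have "M a \<le> M t0" using t0 x by (intro mono_onD[OF M]) auto
  have "Inf ((N \<circ> M) ` {x<..b}) = N (M t0)"
  proof (rule cInf_eq_minimum)
    show "N (M t0) \<in> (N \<circ> M) ` {x<..b}" using t0(1) by (rule rev_image_eqI) simp
    show "N (M t0) \<le> z" if "z \<in> (N \<circ> M) ` {x<..b}" for z
      using that t0 mono_on_Inf_image_greaterThan(3)[OF M x] \<open>M a \<le> M t0\<close> x
      by (auto intro!: mono_onD[OF N] mono_onD[OF M])
  qed
  also have "\<dots> = Inf (N ` {M t0<..M b})"
    using Inf_image_greaterThan_right_continuous[OF N \<open>M a \<le> M t0\<close> m_less rc] ..
  finally show ?thesis .
qed

lemma Inf_comp_image_greaterThan_unattained:
  fixes M N :: "real \<Rightarrow> real" and a b x :: real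
  defines "m \<equiv> Inf (M ` {x<..b})"
  assumes M: "mono_on {a..b} M" and N: "mono_on {M a..M b} N" and x: "a \<le> x" "x < b"
    and unattained: "\<forall>t\<in>{x<..b}. m < M t"
  shows "Inf ((N \<circ> M) ` {x<..b}) = Inf (N ` {m<..M b})"
proof -
  note m_bounds = mono_on_Inf_image_greaterThan[OF M x, folded m_def]
  have M_range: "M a \<le> M t" "M t \<le> M b" if "t \<in> {x<..b}" for t
    using that x by (auto intro: mono_onD[OF M])
  have "M a \<le> M x" using x by (auto intro: mono_onD[OF M])
  with m_bounds(2) have "M a \<le> m" by linarith
  have "m < M b" using unattained x by auto
  show ?thesis
  proof (rule order.antisym)
    have "bdd_below (N ` {m<..M b})"
      by (rule bdd_belowI[of _ "N m"]) (use \<open>M a \<le> m\<close> in \<open>auto intro!: mono_onD[OF N]\<close>)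
    then show "Inf (N ` {m<..M b}) \<le> Inf ((N \<circ> M) ` {x<..b})"
      using x unattained M_range by (intro cInf_greatest) (auto intro!: cInf_lower)
  next
    have "bdd_below ((N \<circ> M) ` {x<..b})"
      by (rule bdd_belowI[of _ "N m"])
        (use m_bounds(3) M_range \<open>M a \<le> m\<close> in \<open>auto intro!: mono_onD[OF N]\<close>)
    show "Inf ((N \<circ> M) ` {x<..b}) \<le> Inf (N ` {m<..M b})"
    proof (rule cInf_greatest)
      fix w assume "w \<in> N ` {m<..M b}"
      then obtain z where z: "m < z" "z \<le> M b" and w: "w = N z" by auto
      obtain t where t: "t \<in> {x<..b}" "M t < z"
        using cInf_lessD[of "M ` {x<..b}" z] x z(1) by (auto simp: m_def)
      have "Inf ((N \<circ> M) ` {x<..b}) \<le> N (M t)"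
        using cInf_lower[OF _ \<open>bdd_below ((N \<circ> M) ` {x<..b})\<close>] t by auto
      also have "\<dots> \<le> N z" using t z M_range[OF t(1)] by (auto intro!: mono_onD[OF N])
      finally show "Inf ((N \<circ> M) ` {x<..b}) \<le> w" using w by simp
    qed (use \<open>m < M b\<close> in auto)
  qed
qed

definition plateau_values :: "(real \<Rightarrow> real) \<Rightarrow> real \<Rightarrow> real \<Rightarrow> real set" where
  "plateau_values M a b =
     {y \<in> {M a..M b}. \<exists>x1 \<in> {a..b}. \<exists>x2 \<in> {a..b}. x1 \<noteq> x2 \<and> M x1 = y \<and> M x2 = y}"

lemma Inf_image_greaterThan_in_plateau_values:
  assumes M: "mono_on {a..b} M" and x: "a \<le> x"
    and t0: "t0 \<in> {x<..b}" "M t0 = Inf (M ` {x<..b})"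
  shows "M t0 \<in> plateau_values M a b"
proof -
  define t1 where "t1 = (x + t0) / 2"
  have t1: "t1 \<in> {x<..b}" "t1 < t0" using t0 by (auto simp: t1_def)
  have "x < b" using t0(1) by simp
  have "M t1 \<le> M t0" using t1 t0 x by (intro mono_onD[OF M]) auto
  moreover have "M t0 \<le> M t1"
    using t0(2) mono_on_Inf_image_greaterThan(3)[OF M x \<open>x < b\<close> t1(1)] by simp
  moreover have "M a \<le> M t0" "M t0 \<le> M b" using t0(1) x by (auto intro!: mono_onD[OF M])
  ultimately show ?thesis
    using t0(1) t1 x unfolding plateau_values_def
    by (intro CollectI conjI bexI[of _ t1] bexI[of _ t0]) auto
qed

section \<open>Measures corresponding to non-decreasing functions\<close>

lemma corresponding_measureD:
  assumes "corresponding_measure F c d \<mu>"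
  shows "space \<mu> = {c..d}" "sets \<mu> = sets (restrict_space borel {c..d})" "finite_measure \<mu>"
    "\<And>g. continuous_on {c..d} g \<Longrightarrow> has_RS_integral g F c d (integral\<^sup>L \<mu> g)"
  using assms unfolding corresponding_measure_def by auto

lemma sets_corresponding_measure_iff:
  assumes "corresponding_measure F c d \<mu>"
  shows "A \<in> sets \<mu> \<longleftrightarrow> A \<subseteq> {c..d} \<and> A \<in> sets borel"
  using corresponding_measureD(2)[OF assms] by (simp add: sets_restrict_space_iff)

lemma measurable_corresponding_measure:
  assumes "corresponding_measure F c d \<mu>"
  shows "measurable \<mu> K = measurable (restrict_space borel {c..d}) K"
  by (rule measurable_cong_sets[OF corresponding_measureD(2)[OF assms] refl])

lemma emeasure_distr_id_corresponding_measure: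
  assumes "corresponding_measure F c d \<mu>" "A \<in> sets borel"
  shows "emeasure (distr \<mu> borel id) A = emeasure \<mu> (A \<inter> {c..d})"
proof -
  have "id \<in> borel_measurable \<mu>"
    unfolding measurable_corresponding_measure[OF assms(1)] by (rule measurable_restrict_space1) simp
  then show ?thesis
    using emeasure_distr[of id \<mu> borel A] assms corresponding_measureD(1)[OF assms(1)] by simp
qed

lemma measure_corresponding_measure_interval:
  assumes "corresponding_measure F c d \<mu>" "c \<le> d"
  shows "measure \<mu> {c..d} = F d - F c"
proof -
  interpret finite_measure \<mu> using corresponding_measureD(3)[OF assms(1)] .
  have "integral\<^sup>L \<mu> (\<lambda>_. 1) = measure \<mu> {c..d}"
    using corresponding_measureD(1)[OF assms(1)] by simp
  then show ?thesis
    using has_RS_integral_unique[OF corresponding_measureD(4)[OF assms(1)] has_RS_integral_one]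
      assms(2) by simp
qed

definition ramp :: "real \<Rightarrow> real \<Rightarrow> real \<Rightarrow> real" where
  "ramp p q z = max 0 (min 1 ((q - z) / (q - p)))"

lemma continuous_on_ramp: "p < q \<Longrightarrow> continuous_on S (ramp p q)"
  unfolding ramp_def by (intro continuous_intros) auto

lemma ramp_bounds: "0 \<le> ramp p q z" "ramp p q z \<le> 1"
  unfolding ramp_def by auto

lemma ramp_eq_one: "p < q \<Longrightarrow> z \<le> p \<Longrightarrow> ramp p q z = 1"
  unfolding ramp_def by (auto simp: field_simps)

lemma ramp_eq_zero: "p < q \<Longrightarrow> q \<le> z \<Longrightarrow> ramp p q z = 0"
  unfolding ramp_def by (auto simp: divide_nonpos_pos)

lemma measure_corresponding_measure_le:
  assumes cm: "corresponding_measure F c d \<mu>" and F: "mono_on {c..d} F"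
    and y: "c \<le> y" "y < v" "v \<le> d"
  shows "measure \<mu> {c..y} \<le> F v - F c"
proof -
  interpret finite_measure \<mu> using corresponding_measureD(3)[OF cm] .
  define q where "q = (y + v) / 2"
  have "y < q" "q < v" using y by (auto simp: q_def)
  define h where "h = ramp y q"
  have h_cont: "continuous_on {c..d} h"
    unfolding h_def using continuous_on_ramp \<open>y < q\<close> .
  have "integrable \<mu> h"
    by (rule integrable_const_bound[where B = 1])
      (use h_cont ramp_bounds in \<open>auto simp: h_def measurable_corresponding_measure[OF cm]
        intro: borel_measurable_continuous_on_restrict\<close>)
  have "{c..y} \<in> sets \<mu>" using sets_corresponding_measure_iff[OF cm] y by auto
  then have "measure \<mu> {c..y} = integral\<^sup>L \<mu> (indicator {c..y})" by simp
  also have "\<dots> \<le> integral\<^sup>L \<mu> h"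
    using \<open>integrable \<mu> h\<close> \<open>y < q\<close>
    by (intro integral_mono') (auto simp: h_def ramp_eq_one ramp_bounds indicator_def)
  also have "\<dots> \<le> F v - F c"
    using corresponding_measureD(4)[OF cm h_cont] \<open>y < q\<close> \<open>q < v\<close> y
    by (intro has_RS_integral_le_increment[OF F, of h _ q]) (auto simp: h_def ramp_bounds ramp_eq_zero)
  finally show ?thesis .
qed

lemma measure_corresponding_measure_ge:
  assumes cm: "corresponding_measure F c d \<mu>" and F: "mono_on {c..d} F"
    and u: "c \<le> u" "u < s" "s \<le> d"
  shows "F u - F c \<le> measure \<mu> {c..s}"
proof -
  interpret finite_measure \<mu> using corresponding_measureD(3)[OF cm] .
  define p where "p = (u + s) / 2"
  have "u < p" "p < s" using u by (auto simp: p_def)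
  define h where "h = ramp p s"
  have h_cont: "continuous_on {c..d} h"
    unfolding h_def using continuous_on_ramp \<open>p < s\<close> .
  have "F u - F c \<le> integral\<^sup>L \<mu> h"
    using corresponding_measureD(4)[OF cm h_cont] \<open>u < p\<close> \<open>p < s\<close> u
    by (intro has_RS_integral_ge_increment[OF F, of h _ u p]) (auto simp: h_def ramp_bounds ramp_eq_one)
  also have "\<dots> \<le> measure \<mu> {c..s}"
  proof -
    have "{c..s} \<in> sets \<mu>" using sets_corresponding_measure_iff[OF cm] u by auto
    then have "integrable \<mu> (indicator {c..s} :: real \<Rightarrow> real)"
      by (simp add: integrable_indicator_iff less_top[symmetric])
    moreover have "h z \<le> indicator {c..s} z" if "z \<in> space \<mu>" for z
      using that corresponding_measureD(1)[OF cm] \<open>p < s\<close>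
      by (auto simp: h_def indicator_def ramp_bounds ramp_eq_zero)
    ultimately have "integral\<^sup>L \<mu> h \<le> integral\<^sup>L \<mu> (indicator {c..s})"
      by (intro integral_mono') (auto simp: h_def ramp_bounds)
    then show ?thesis using \<open>{c..s} \<in> sets \<mu>\<close> by simp
  qed
  finally show ?thesis .
qed

lemma measure_atLeastAtMost_right_limit:
  fixes \<mu> :: "real measure"
  assumes "finite_measure \<mu>" "y \<le> d" and sets: "\<And>s. s \<in> {y..d} \<Longrightarrow> {c..s} \<in> sets \<mu>"
  shows "(\<lambda>n. measure \<mu> {c..y + (d - y) / Suc n}) \<longlonglongrightarrow> measure \<mu> {c..y}"
proof -
  interpret finite_measure \<mu> by fact
  define r where "r n = y + (d - y) / Suc n" for n :: nat
  have r_bounds: "y \<le> r n" "r n \<le> d" for n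
    using assms(2) divide_left_mono[of 1 "Suc n" "d - y"] by (auto simp: r_def)
  have "(\<lambda>n. y + (d - y) * inverse (real (Suc n))) \<longlonglongrightarrow> y + (d - y) * 0"
    by (intro tendsto_intros LIMSEQ_inverse_real_of_nat)
  then have "r \<longlonglongrightarrow> y" unfolding r_def divide_inverse by simp
  have "(\<Inter>n. {c..r n}) = {c..y}"
  proof
    show "{c..y} \<subseteq> (\<Inter>n. {c..r n})" by (auto intro: order_trans[OF _ r_bounds(1)])
    show "(\<Inter>n. {c..r n}) \<subseteq> {c..y}"
    proof
      fix z assume "z \<in> (\<Inter>n. {c..r n})"
      then have "c \<le> z" "\<forall>n. z \<le> r n" by auto
      with LIMSEQ_le_const[OF \<open>r \<longlonglongrightarrow> y\<close>] show "z \<in> {c..y}" by auto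
    qed
  qed
  moreover have "r n \<le> r m" if "m \<le> n" for m n
    unfolding r_def using assms(2) that by (auto intro!: divide_left_mono)
  then have "decseq (\<lambda>n. {c..r n})"
    by (auto simp: decseq_def intro: order_trans)
  moreover have "range (\<lambda>n. {c..r n}) \<subseteq> sets \<mu>"
    using sets r_bounds by auto
  ultimately have "(\<lambda>n. measure \<mu> {c..r n}) \<longlonglongrightarrow> measure \<mu> {c..y}"
    using finite_Lim_measure_decseq by metis
  then show ?thesis by (simp only: r_def)
qed

lemma measure_corresponding_measure_atLeastAtMost:
  assumes cm: "corresponding_measure F c d \<mu>" and F: "mono_on {c..d} F"
    and y: "c \<le> y" "y < d"
  shows "measure \<mu> {c..y} = Inf (F ` {y<..d}) - F c"
proof -
  interpret finite_measure \<mu> using corresponding_measureD(3)[OF cm] .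
  note bdd = mono_on_Inf_image_greaterThan(1)[OF F y]
  have "measure \<mu> {c..y} + F c \<le> Inf (F ` {y<..d})"
    using measure_corresponding_measure_le[OF cm F] y by (intro cInf_greatest) force+
  moreover have "Inf (F ` {y<..d}) - F c \<le> measure \<mu> {c..y}"
  proof (rule LIMSEQ_le_const[OF measure_atLeastAtMost_right_limit[OF finite_measure_axioms]])
    show "{c..s} \<in> sets \<mu>" if "s \<in> {y..d}" for s
      using that y sets_corresponding_measure_iff[OF cm] by auto
    show "\<exists>N. \<forall>n\<ge>N. Inf (F ` {y<..d}) - F c \<le> measure \<mu> {c..y + (d - y) / Suc n}"
    proof (intro exI allI impI)
      fix n :: nat
      define u where "u = y + (d - y) / (2 * Suc n)"
      define s where "s = y + (d - y) / Suc n"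
      have "y * real n \<le> d * real n" using y by (intro mult_right_mono) auto
      then have u: "y < u" "u < s" "s \<le> d" using y by (auto simp: u_def s_def field_simps)
      have "Inf (F ` {y<..d}) \<le> F u" by (rule cInf_lower[OF _ bdd]) (use u in auto)
      also have "F u - F c \<le> measure \<mu> {c..s}"
        by (rule measure_corresponding_measure_ge[OF cm F]) (use u y in auto)
      finally show "Inf (F ` {y<..d}) - F c \<le> measure \<mu> {c..y + (d - y) / Suc n}"
        by (simp add: s_def)
    qed
  qed (use y in auto)
  ultimately show ?thesis by simp
qed

lemma measure_corresponding_measure_comp_atLeastAtMost:
  fixes a b x :: real and M N :: "real \<Rightarrow> real"
  assumes M: "mono_on {a..b} M" and N: "mono_on {M a..M b} N"
    and lam: "corresponding_measure (N \<circ> M) a b lam"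
    and nu: "corresponding_measure N (M a) (M b) nu"
    and H: "\<forall>y \<in> plateau_values M a b. y < M b \<longrightarrow> continuous (at_right y) N"
    and x: "a \<le> x" "x < b"
  shows "measure lam {a..x} = measure nu {M a..Inf (M ` {x<..b})}"
proof -
  define m where "m = Inf (M ` {x<..b})"
  note m_bounds = mono_on_Inf_image_greaterThan[OF M x, folded m_def]
  have M_range: "M a \<le> M t" "M t \<le> M b" if "t \<in> {x<..b}" for t
    using that x by (auto intro: mono_onD[OF M])
  have "M a \<le> M x" using x by (auto intro: mono_onD[OF M])
  have "M a \<le> m" "m \<le> M b" using m_bounds(2) m_bounds(3)[of b] \<open>M a \<le> M x\<close> x by auto
  have "M ` {a..b} \<subseteq> {M a..M b}" using x by (auto intro!: mono_onD[OF M])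
  then have "mono_on {a..b} (N \<circ> M)" by (rule monotone_on_o[OF N M])
  then have lam_eq: "measure lam {a..x} = Inf ((N \<circ> M) ` {x<..b}) - N (M a)"
    using measure_corresponding_measure_atLeastAtMost[OF lam _ x] by simp
  show ?thesis
  proof (cases "m = M b")
    case True
    then have "(N \<circ> M) ` {x<..b} = {N (M b)}"
      using m_bounds(3) M_range x by fastforce
    then show ?thesis
      using lam_eq measure_corresponding_measure_interval[OF nu] True \<open>M a \<le> m\<close> by (simp add: m_def)
  next
    case False
    then have "m < M b" using \<open>m \<le> M b\<close> by simp
    have nu_eq: "measure nu {M a..m} = Inf (N ` {m<..M b}) - N (M a)"
      using measure_corresponding_measure_atLeastAtMost[OF nu N \<open>M a \<le> m\<close> \<open>m < M b\<close>] .
    have "Inf ((N \<circ> M) ` {x<..b}) = Inf (N ` {m<..M b})"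
    proof (cases "\<exists>t0\<in>{x<..b}. M t0 = m")
      case True
      then obtain t0 where t0: "t0 \<in> {x<..b}" "M t0 = m" by blast
      then have "m \<in> plateau_values M a b"
        using Inf_image_greaterThan_in_plateau_values[OF M x(1)] by (simp add: m_def)
      then have "continuous (at_right m) N" using H \<open>m < M b\<close> by blast
      then show ?thesis
        using Inf_comp_image_greaterThan_attained[OF M N x t0[unfolded m_def]] t0(2) \<open>m < M b\<close>
        by (simp add: m_def)
    next
      case False
      then have "\<forall>t\<in>{x<..b}. m < M t" using m_bounds(3) by force
      then show ?thesis
        using Inf_comp_image_greaterThan_unattained[OF M N x] by (simp add: m_def)
    qed
    then show ?thesis using lam_eq nu_eq by (simp add: m_def)
  qed
qed

section \<open>The generalised inverse and the image measure\<close>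

lemma gen_inverse_in_interval:
  assumes "a \<le> b" "y \<le> M b"
  shows "gen_inverse M a b y \<in> {a..b}"
proof -
  have "{x \<in> {a..b}. y \<le> M x} \<noteq> {}" using assms by auto
  then have "a \<le> Inf {x \<in> {a..b}. y \<le> M x}" by (rule cInf_greatest) auto
  moreover have "Inf {x \<in> {a..b}. y \<le> M x} \<le> b"
    by (rule cInf_lower) (use assms in \<open>auto intro: bdd_belowI[of _ a]\<close>)
  ultimately show ?thesis by (simp add: gen_inverse_def)
qed

lemma mono_on_gen_inverse:
  assumes "a \<le> b"
  shows "mono_on {..M b} (gen_inverse M a b)"
proof (rule mono_onI)
  fix y1 y2 assume y: "y1 \<in> {..M b}" "y2 \<in> {..M b}" "y1 \<le> y2"
  then have "{x \<in> {a..b}. y2 \<le> M x} \<noteq> {}" using assms by auto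
  then show "gen_inverse M a b y1 \<le> gen_inverse M a b y2"
    unfolding gen_inverse_def
    by (rule cInf_superset_mono) (use y in \<open>auto intro: bdd_belowI[of _ a]\<close>)
qed

lemma borel_measurable_gen_inverse:
  assumes "a \<le> b" "corresponding_measure N (M a) (M b) \<nu>"
  shows "gen_inverse M a b \<in> borel_measurable \<nu>"
  unfolding measurable_corresponding_measure[OF assms(2)]
  using mono_on_subset[OF mono_on_gen_inverse[OF assms(1)]]
  by (intro borel_measurable_mono_on_fnc) auto

lemma gen_inverse_le_iff:
  assumes M: "mono_on {a..b} M" and x: "a \<le> x" "x < b" and y: "y \<le> M b"
  shows "gen_inverse M a b y \<le> x \<longleftrightarrow> y \<le> Inf (M ` {x<..b})"
proof -
  define S where "S = {t \<in> {a..b}. y \<le> M t}"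
  have "S \<noteq> {}" using y x by (auto simp: S_def)
  have bdd: "bdd_below S" by (rule bdd_belowI[of _ a]) (auto simp: S_def)
  note m_bounds = mono_on_Inf_image_greaterThan[OF M x]
  show ?thesis
  proof
    assume le: "gen_inverse M a b y \<le> x"
    show "y \<le> Inf (M ` {x<..b})"
    proof (rule cInf_greatest)
      fix w assume "w \<in> M ` {x<..b}"
      then obtain t where t: "x < t" "t \<le> b" "w = M t" by auto
      have "Inf S < t" using le t by (simp add: gen_inverse_def S_def)
      then obtain s where s: "s \<in> S" "s < t" using cInf_lessD[OF \<open>S \<noteq> {}\<close>] by blast
      then have "y \<le> M s" by (simp add: S_def)
      also have "M s \<le> M t" using s t x by (intro mono_onD[OF M]) (auto simp: S_def)
      finally show "y \<le> w" using t by simp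
    qed (use x in auto)
  next
    assume le: "y \<le> Inf (M ` {x<..b})"
    have "Inf S \<le> x"
    proof (rule dense_ge_bounded[OF x(2)])
      fix w assume w: "x < w" "w < b"
      then have "w \<in> S" using le m_bounds(3)[of w] x by (auto simp: S_def)
      then show "Inf S \<le> w" by (rule cInf_lower[OF _ bdd])
    qed
    then show "gen_inverse M a b y \<le> x" by (simp add: gen_inverse_def S_def)
  qed
qed

lemma gen_inverse_vimage_greaterThan:
  assumes M: "mono_on {a..b} M" and x: "a \<le> x" "x < b"
  shows "gen_inverse M a b -` {x<..} \<inter> {M a..M b} = {M a..M b} - {M a..Inf (M ` {x<..b})}"
proof -
  have "x < gen_inverse M a b y \<longleftrightarrow> Inf (M ` {x<..b}) < y" if "y \<le> M b" for y
    using gen_inverse_le_iff[OF M x that] by linarith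
  then show ?thesis by auto
qed

lemma measure_corresponding_measure_comp_greaterThan:
  fixes a b x :: real and M N :: "real \<Rightarrow> real"
  assumes M: "mono_on {a..b} M" and N: "mono_on {M a..M b} N"
    and lam: "corresponding_measure (N \<circ> M) a b lam"
    and nu: "corresponding_measure N (M a) (M b) nu"
    and H: "\<forall>y \<in> plateau_values M a b. y < M b \<longrightarrow> continuous (at_right y) N"
    and x: "a \<le> x" "x < b"
  shows "measure lam ({x<..} \<inter> {a..b}) = measure nu (gen_inverse M a b -` {x<..} \<inter> {M a..M b})"
proof -
  interpret L: finite_measure lam using corresponding_measureD(3)[OF lam] .
  interpret V: finite_measure nu using corresponding_measureD(3)[OF nu] .
  define m where "m = Inf (M ` {x<..b})"
  have "m \<le> M b" using mono_on_Inf_image_greaterThan(3)[OF M x, of b] x by (simp add: m_def)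
  have "M a \<le> M b" using x by (auto intro: mono_onD[OF M])
  have "{x<..} \<inter> {a..b} = {a..b} - {a..x}" using x by auto
  then have "measure lam ({x<..} \<inter> {a..b}) = measure lam {a..b} - measure lam {a..x}"
    using x sets_corresponding_measure_iff[OF lam] by (simp add: L.finite_measure_Diff)
  also have "\<dots> = measure nu {M a..M b} - measure nu {M a..m}"
    using measure_corresponding_measure_interval[OF lam] measure_corresponding_measure_interval[OF nu]
      measure_corresponding_measure_comp_atLeastAtMost[OF M N lam nu H x] x \<open>M a \<le> M b\<close>
    by (simp add: m_def)
  also have "\<dots> = measure nu ({M a..M b} - {M a..m})"
    using \<open>m \<le> M b\<close> sets_corresponding_measure_iff[OF nu] by (intro V.finite_measure_Diff[symmetric]) auto
  also have "\<dots> = measure nu (gen_inverse M a b -` {x<..} \<inter> {M a..M b})"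
    using gen_inverse_vimage_greaterThan[OF M x] by (simp add: m_def)
  finally show ?thesis .
qed

lemma distr_corresponding_measure_comp_eq:
  fixes a b :: real and M N :: "real \<Rightarrow> real"
  assumes ab: "a < b" and M: "mono_on {a..b} M" and N: "mono_on {M a..M b} N"
    and lam: "corresponding_measure (N \<circ> M) a b lam"
    and nu: "corresponding_measure N (M a) (M b) nu"
    and H: "\<forall>y \<in> plateau_values M a b. y < M b \<longrightarrow> continuous (at_right y) N"
  shows "distr lam borel id = distr nu borel (gen_inverse M a b)"
proof -
  interpret L: finite_measure lam using corresponding_measureD(3)[OF lam] .
  interpret V: finite_measure nu using corresponding_measureD(3)[OF nu] .
  have X_in: "gen_inverse M a b y \<in> {a..b}" if "y \<in> {M a..M b}" for y
    using gen_inverse_in_interval[of a b y M] ab that by auto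
  have e1: "emeasure (distr lam borel id) A = measure lam (A \<inter> {a..b})" if "A \<in> sets borel" for A
    using emeasure_distr_id_corresponding_measure[OF lam that] by (simp add: L.emeasure_eq_measure)
  have e2: "emeasure (distr nu borel (gen_inverse M a b)) A
      = measure nu (gen_inverse M a b -` A \<inter> {M a..M b})" if "A \<in> sets borel" for A
    using emeasure_distr[OF borel_measurable_gen_inverse[OF less_imp_le[OF ab] nu] that]
      corresponding_measureD(1)[OF nu] by (simp add: V.emeasure_eq_measure)
  show ?thesis
  proof (rule measure_eqI_lessThan)
    fix x :: real
    show "emeasure (distr lam borel id) {x<..} < \<infinity>"
      using e1[of "{x<..}"] by simp
    consider "x < a" | "a \<le> x" "x < b" | "b \<le> x" by linarith
    then show "emeasure (distr lam borel id) {x<..} = emeasure (distr nu borel (gen_inverse M a b)) {x<..}"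
    proof cases
      case 1
      then have "{x<..} \<inter> {a..b} = {a..b}" "gen_inverse M a b -` {x<..} \<inter> {M a..M b} = {M a..M b}"
        using X_in by force+
      moreover have "M a \<le> M b" using ab by (auto intro: mono_onD[OF M])
      ultimately show ?thesis
        using measure_corresponding_measure_interval[OF lam] measure_corresponding_measure_interval[OF nu] ab
        by (simp add: e1 e2)
    next
      case 2
      then show ?thesis
        using measure_corresponding_measure_comp_greaterThan[OF M N lam nu H] by (simp add: e1 e2)
    next
      case 3
      then have "{x<..} \<inter> {a..b} = {}" "gen_inverse M a b -` {x<..} \<inter> {M a..M b} = {}"
        using X_in by force+
      then show ?thesis by (simp add: e1 e2)
    qed
  qed simp_all
qed

lemma corresponding_measure_comp_eq_distr_gen_inverse:
  fixes a b :: real and M N :: "real \<Rightarrow> real"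
  assumes ab: "a < b" and M: "mono_on {a..b} M" and N: "mono_on {M a..M b} N"
    and lam: "corresponding_measure (N \<circ> M) a b lam"
    and nu: "corresponding_measure N (M a) (M b) nu"
    and H: "\<forall>y \<in> plateau_values M a b. y < M b \<longrightarrow> continuous (at_right y) N"
  shows "gen_inverse M a b \<in> measurable nu lam" "lam = distr nu lam (gen_inverse M a b)"
proof -
  have X_borel: "gen_inverse M a b \<in> borel_measurable nu"
    using borel_measurable_gen_inverse[OF less_imp_le[OF ab] nu] .
  moreover have "gen_inverse M a b \<in> space nu \<rightarrow> {a..b}"
    using gen_inverse_in_interval[of a b _ M] ab corresponding_measureD(1)[OF nu] by auto
  ultimately show X: "gen_inverse M a b \<in> measurable nu lam"
    unfolding measurable_cong_sets[OF refl corresponding_measureD(2)[OF lam]]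
    by (simp add: measurable_restrict_space2_iff)
  show "lam = distr nu lam (gen_inverse M a b)"
  proof (rule measure_eqI)
    fix E assume "E \<in> sets lam"
    then have "E \<in> sets borel" "E \<inter> {a..b} = E"
      using sets_corresponding_measure_iff[OF lam] by auto
    then have "emeasure lam E = emeasure (distr lam borel id) E"
      using emeasure_distr_id_corresponding_measure[OF lam] by simp
    also have "\<dots> = emeasure (distr nu borel (gen_inverse M a b)) E"
      by (simp add: distr_corresponding_measure_comp_eq[OF ab M N lam nu H])
    also have "\<dots> = emeasure (distr nu lam (gen_inverse M a b)) E"
      using emeasure_distr[OF X \<open>E \<in> sets lam\<close>] emeasure_distr[OF X_borel \<open>E \<in> sets borel\<close>] by simp
    finally show "emeasure lam E = emeasure (distr nu lam (gen_inverse M a b)) E" .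
  qed simp
qed

theorem mainTheorem1:
  fixes a b :: real and M N f :: "real \<Rightarrow> real" and lam nu :: "real measure"
  assumes "a < b"
    and "mono_on {a..b} M"
    and "mono_on {M a..M b} N"
    and "corresponding_measure (N \<circ> M) a b lam"
    and "corresponding_measure N (M a) (M b) nu"
    and "\<forall>y \<in> {y \<in> {M a..M b}. \<exists>x1 \<in> {a..b}. \<exists>x2 \<in> {a..b}. x1 \<noteq> x2 \<and> M x1 = y \<and> M x2 = y}.
           y < M b \<longrightarrow> continuous (at_right y) N"
  shows "(\<forall>E \<in> sets lam. emeasure lam E = emeasure nu (gen_inverse M a b -` E \<inter> {M a..M b}))
     \<and> ((f \<in> borel_measurable lam \<and> bounded (f ` {a..b})) \<longrightarrow>
          integral\<^sup>L lam f = integral\<^sup>L nu (\<lambda>y. f (gen_inverse M a b y)))"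
proof -
  note X = corresponding_measure_comp_eq_distr_gen_inverse[OF assms(1-5) assms(6)[folded plateau_values_def]]
  have "space nu = {M a..M b}" using corresponding_measureD(1)[OF assms(5)] .
  then have "emeasure lam E = emeasure nu (gen_inverse M a b -` E \<inter> {M a..M b})"
    if "E \<in> sets lam" for E
    using emeasure_distr[OF X(1) that] X(2) by simp
  moreover have "integral\<^sup>L lam f = integral\<^sup>L nu (\<lambda>y. f (gen_inverse M a b y))"
    if "f \<in> borel_measurable lam"
    using integral_distr[OF X(1) that] X(2) by simp
  ultimately show ?thesis by blast
qed

end
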